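(* Let $\epsilon,r>0$. Then there exist a sponsored search setting (numbers of agents $n$ and slots $k\le n$), $\alpha\in\mathbb{R}^n_{>}$ and $\theta\in\Theta^\alpha$ such that $R(\theta)\ge r$ and $\alpha$-VCG has a Nash equilibrium (for $\theta$) with revenue at most $\epsilon$. Similarly, there exist such a setting, $\alpha\in\mathbb{R}^n_{>}$ and $\theta\in\Theta^\alpha$ such that $R(\theta)\ge r$ and $\alpha$-GSP has a Nash equilibrium (for $\theta$) with revenue at most $\epsilon$.
   Context: Sponsored search setting: a set $N=\{1,\dots,n\}$ of agents and $k\le n$ slots. An outcome assigns the agents to distinct positions in $\{1,\dots,n\}$; position $j\le k$ means receiving slot $j$, positions $>k$ mean receiving nothing (value $0$). Utilities are quasilinear. $\mathbb{R}^n_{>}$ is the set of vectors $\alpha$ with $1=\alpha_1>\alpha_2>\dots>\alpha_k>0$ and $\alpha_j=0$ for $j>k$ (set $\alpha_{n+1}=0$). For $\alpha\in\mathbb{R}^n_{>}$, $\Theta^\alpha$ is the set of type profiles in which each agent $i$ has a value $v_i(\theta_i)\ge0$ and values slot $j$ at $\alpha_j v_i(\theta_i)$. VCG: agents report bids $x_{i,j}$ for each slot; an assignment maximizing total bid is chosen and each agent pays the Clarke payment. The VCG outcome for $\theta$ is the result of VCG under truthful bids $x_{i,j}=$ true value of $i$ for slot $j$; $R(\theta)$ is its revenue (sum of payments). $\alpha$-GSP and $\alpha$-VCG: each agent submits a single $b_i\ge 0$, interpreted as bid $\alpha_j b_i$ on slot $j$. Agents are ranked by $b_i$ (ties arbitrary);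 the agent of rank $j\le k$ gets slot $j$. Writing $b_{(l)}$ for the $l$-th highest submitted value ($0$ if $l>n$): in $\alpha$-GSP the rank-$j$ agent pays $\alpha_j b_{(j+1)}$; in $\alpha$-VCG (the VCG mechanism applied to these bid vectors) it pays $\sum_{l=j}^{k}(\alpha_l-\alpha_{l+1})b_{(l+1)}$. Revenue is the sum of payments. A Nash equilibrium (for a given type profile, complete information) is a profile of submitted numbers from which no agent can strictly gain by unilaterally changing its number. *)

theory Defs
  imports Complex_Main
begin

text \<open>Agents are 0,...,n-1; positions are 1,...,n; positions j > k carry no slot.
  A type profile in Theta^alpha is represented by the value vector v (v i \<ge> 0);
  agent i values position j at alpha j * v i.\<close>

definition alpha_ok :: "nat \<Rightarrow> nat \<Rightarrow> (nat \<Rightarrow> real) \<Rightarrow> bool" where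
  "alpha_ok n k \<alpha> \<longleftrightarrow> 1 \<le> k \<and> k \<le> n \<and> \<alpha> 1 = 1 \<and>
     (\<forall>j. 1 \<le> j \<and> j < k \<longrightarrow> \<alpha> (Suc j) < \<alpha> j) \<and> \<alpha> k > 0 \<and>
     (\<forall>j. k < j \<longrightarrow> \<alpha> j = 0)"

definition types_ok :: "nat \<Rightarrow> (nat \<Rightarrow> real) \<Rightarrow> bool" where
  "types_ok n v \<longleftrightarrow> (\<forall>i<n. 0 \<le> v i)"

definition assignment :: "nat \<Rightarrow> nat set \<Rightarrow> (nat \<Rightarrow> nat) \<Rightarrow> bool" where
  "assignment n S \<sigma> \<longleftrightarrow> inj_on \<sigma> S \<and> \<sigma> ` S \<subseteq> {1..n}"

definition welfare_of :: "(nat \<Rightarrow> real) \<Rightarrow> (nat \<Rightarrow> real) \<Rightarrow> nat set \<Rightarrow> (nat \<Rightarrow> nat) \<Rightarrow> real" where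
  "welfare_of \<alpha> v S \<sigma> = (\<Sum>i\<in>S. \<alpha> (\<sigma> i) * v i)"

definition opt_welfare :: "nat \<Rightarrow> (nat \<Rightarrow> real) \<Rightarrow> (nat \<Rightarrow> real) \<Rightarrow> nat set \<Rightarrow> real" where
  "opt_welfare n \<alpha> v S = Max {welfare_of \<alpha> v S \<sigma> | \<sigma>. assignment n S \<sigma>}"

definition vcg_outcome :: "nat \<Rightarrow> (nat \<Rightarrow> real) \<Rightarrow> (nat \<Rightarrow> real) \<Rightarrow> nat \<Rightarrow> nat" where
  "vcg_outcome n \<alpha> v = (SOME \<sigma>. assignment n {..<n} \<sigma> \<and>
      welfare_of \<alpha> v {..<n} \<sigma> = opt_welfare n \<alpha> v {..<n})"

definition clarke_payment :: "nat \<Rightarrow> (nat \<Rightarrow> real) \<Rightarrow> (nat \<Rightarrow> real) \<Rightarrow> nat \<Rightarrow> real" where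
  "clarke_payment n \<alpha> v i = opt_welfare n \<alpha> v ({..<n} - {i})
      - welfare_of \<alpha> v ({..<n} - {i}) (vcg_outcome n \<alpha> v)"

definition vcg_revenue :: "nat \<Rightarrow> (nat \<Rightarrow> real) \<Rightarrow> (nat \<Rightarrow> real) \<Rightarrow> real" where
  "vcg_revenue n \<alpha> v = (\<Sum>i<n. clarke_payment n \<alpha> v i)"

text \<open>Rank of agent i under bids b (ties broken in favour of the lower index).\<close>
definition rank :: "nat \<Rightarrow> (nat \<Rightarrow> real) \<Rightarrow> nat \<Rightarrow> nat" where
  "rank n b i = Suc (card {j. j < n \<and> (b j > b i \<or> (b j = b i \<and> j < i))})"

text \<open>l-th highest submitted value (0 if l > n).\<close>
definition bid_at :: "nat \<Rightarrow> (nat \<Rightarrow> real) \<Rightarrow> nat \<Rightarrow> real" where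
  "bid_at n b l = (if 1 \<le> l \<and> l \<le> n then b (THE j. j < n \<and> rank n b j = l) else 0)"

definition gsp_payment :: "nat \<Rightarrow> (nat \<Rightarrow> real) \<Rightarrow> (nat \<Rightarrow> real) \<Rightarrow> nat \<Rightarrow> real" where
  "gsp_payment n \<alpha> b i = \<alpha> (rank n b i) * bid_at n b (Suc (rank n b i))"

definition avcg_payment :: "nat \<Rightarrow> nat \<Rightarrow> (nat \<Rightarrow> real) \<Rightarrow> (nat \<Rightarrow> real) \<Rightarrow> nat \<Rightarrow> real" where
  "avcg_payment n k \<alpha> b i =
     (\<Sum>l\<in>{rank n b i..k}. (\<alpha> l - \<alpha> (Suc l)) * bid_at n b (Suc l))"

definition utility :: "nat \<Rightarrow> (nat \<Rightarrow> real) \<Rightarrow> ((nat \<Rightarrow> real) \<Rightarrow> nat \<Rightarrow> real)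
     \<Rightarrow> (nat \<Rightarrow> real) \<Rightarrow> (nat \<Rightarrow> real) \<Rightarrow> nat \<Rightarrow> real" where
  "utility n \<alpha> pay v b i = \<alpha> (rank n b i) * v i - pay b i"

definition nash :: "nat \<Rightarrow> (nat \<Rightarrow> real) \<Rightarrow> ((nat \<Rightarrow> real) \<Rightarrow> nat \<Rightarrow> real)
     \<Rightarrow> (nat \<Rightarrow> real) \<Rightarrow> (nat \<Rightarrow> real) \<Rightarrow> bool" where
  "nash n \<alpha> pay v b \<longleftrightarrow> (\<forall>i<n. 0 \<le> b i) \<and>
     (\<forall>i<n. \<forall>b'. 0 \<le> b' \<longrightarrow> utility n \<alpha> pay v (b(i := b')) i \<le> utility n \<alpha> pay v b i)"

definition revenue :: "nat \<Rightarrow> ((nat \<Rightarrow> real) \<Rightarrow> nat \<Rightarrow> real) \<Rightarrow> (nat \<Rightarrow> real) \<Rightarrow> real" where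
  "revenue n pay b = (\<Sum>i<n. pay b i)"

end

theory Submission
  imports Defs "HOL-Library.FuncSet"
begin

text \<open>A single slot and two agents of equal value r suffice. Truthful VCG is then the
  second-price auction and earns r. In both single-bid mechanisms the winner pays the second
  highest bid. If one agent bids r and the other bids 0, the winner pays nothing, while
  outbidding it would cost the loser at least its value, so this profile is an equilibrium
  with revenue 0.\<close>

text \<open>Keep 1 from being rewritten to Suc 0, so that the lemmas below about agent and
  slot 1 keep matching.\<close>
declare One_nat_def [simp del]

lemma less_two_iff: "(i::nat) < 2 \<longleftrightarrow> i = 0 \<or> i = 1"
  by auto

lemma finite_welfare_values:
  assumes "finite S"
  shows "finite {welfare_of \<alpha> v S \<sigma> | \<sigma>. assignment n S \<sigma>}"
proof (rule finite_subset)
  show "{welfare_of \<alpha> v S \<sigma> | \<sigma>. assignment n S \<sigma>}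
      \<subseteq> welfare_of \<alpha> v S ` (S \<rightarrow>\<^sub>E {1..n})"
  proof clarify
    fix \<sigma> assume "assignment n S \<sigma>"
    then have "restrict \<sigma> S \<in> S \<rightarrow>\<^sub>E {1..n}"
      by (auto simp: assignment_def)
    moreover have "welfare_of \<alpha> v S \<sigma> = welfare_of \<alpha> v S (restrict \<sigma> S)"
      by (simp add: welfare_of_def)
    ultimately show "welfare_of \<alpha> v S \<sigma> \<in> welfare_of \<alpha> v S ` (S \<rightarrow>\<^sub>E {1..n})"
      by blast
  qed
  show "finite (welfare_of \<alpha> v S ` (S \<rightarrow>\<^sub>E {1..n}))"
    using assms by (simp add: finite_PiE)
qed

lemma opt_welfare_eqI:
  assumes "finite S" and "assignment n S \<sigma>" and "welfare_of \<alpha> v S \<sigma> = w"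
    and "\<And>\<tau>. assignment n S \<tau> \<Longrightarrow> welfare_of \<alpha> v S \<tau> \<le> w"
  shows "opt_welfare n \<alpha> v S = w"
  unfolding opt_welfare_def
  using assms by (intro Max_eqI finite_welfare_values) auto

definition single_slot :: "nat \<Rightarrow> real" where
  "single_slot j = (if j = 1 then 1 else 0)"

lemma alpha_ok_single_slot: "1 \<le> n \<Longrightarrow> alpha_ok n 1 single_slot"
  by (auto simp: alpha_ok_def single_slot_def)

lemma opt_welfare_single_slot_singleton:
  assumes "0 \<le> v i" and "1 \<le> n"
  shows "opt_welfare n single_slot v {i} = v i"
  by (rule opt_welfare_eqI[where \<sigma> = "\<lambda>_. 1"])
    (use assms in \<open>auto simp: assignment_def welfare_of_def single_slot_def\<close>)

lemma welfare_single_slot_two_agents: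
  "welfare_of single_slot v {0, 1} \<sigma> = single_slot (\<sigma> 0) * v 0 + single_slot (\<sigma> 1) * v 1"
  by (simp add: welfare_of_def)

lemma opt_welfare_single_slot_two_agents:
  "opt_welfare 2 single_slot v {0, 1} = max (v 0) (v 1)"
proof (rule opt_welfare_eqI)
  let ?\<sigma> = "\<lambda>i::nat. if (i = 0) = (v 1 \<le> v 0) then 1 else 2 :: nat"
  show "assignment 2 {0, 1} ?\<sigma>"
    by (auto simp: assignment_def)
  show "welfare_of single_slot v {0, 1} ?\<sigma> = max (v 0) (v 1)"
    by (cases "v 1 \<le> v 0") (simp_all add: welfare_single_slot_two_agents single_slot_def)
  fix \<tau> assume "assignment 2 {0, 1} \<tau>"
  then have "\<tau> 0 \<in> {1..2}" and "\<tau> 1 \<in> {1..2}" and "\<tau> 0 \<noteq> \<tau> 1"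
    unfolding assignment_def inj_on_def by auto
  then consider "\<tau> 0 = 1" "\<tau> 1 = 2" | "\<tau> 0 = 2" "\<tau> 1 = 1"
    by fastforce
  then show "welfare_of single_slot v {0, 1} \<tau> \<le> max (v 0) (v 1)"
    by cases (simp_all add: welfare_single_slot_two_agents single_slot_def)
qed simp

lemma welfare_vcg_outcome:
  "welfare_of \<alpha> v {..<n} (vcg_outcome n \<alpha> v) = opt_welfare n \<alpha> v {..<n}"
proof -
  have "assignment n {..<n} Suc"
    by (auto simp: assignment_def)
  then have "opt_welfare n \<alpha> v {..<n} \<in> {welfare_of \<alpha> v {..<n} \<sigma> | \<sigma>. assignment n {..<n} \<sigma>}"
    unfolding opt_welfare_def by (intro Max_in finite_welfare_values) auto
  then have "\<exists>\<sigma>. assignment n {..<n} \<sigma> \<and> welfare_of \<alpha> v {..<n} \<sigma> = opt_welfare n \<alpha> v {..<n}"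
    by auto
  then show ?thesis
    unfolding vcg_outcome_def by (rule someI_ex[THEN conjunct2])
qed

lemma vcg_revenue_single_slot_two_agents:
  assumes "types_ok 2 v"
  shows "vcg_revenue 2 single_slot v = min (v 0) (v 1)"
proof -
  have agents: "{..<2::nat} = {0, 1}"
    by auto
  have opt_single: "opt_welfare 2 single_slot v {i} = v i" if "i < 2" for i
    using assms that by (intro opt_welfare_single_slot_singleton) (auto simp: types_ok_def)
  define \<sigma> where "\<sigma> = vcg_outcome 2 single_slot v"
  have "welfare_of single_slot v {0, 1} \<sigma> = max (v 0) (v 1)"
    using welfare_vcg_outcome[of single_slot v 2]
    by (simp add: agents \<sigma>_def opt_welfare_single_slot_two_agents)
  moreover have "clarke_payment 2 single_slot v i = v (1 - i) - single_slot (\<sigma> (1 - i)) * v (1 - i)"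
    if "i < 2" for i
  proof -
    have "{..<2} - {i} = {1 - i}"
      using that by (auto dest: less_two_iff[THEN iffD1])
    then show ?thesis
      by (simp add: clarke_payment_def opt_single welfare_of_def \<sigma>_def)
  qed
  then have "vcg_revenue 2 single_slot v
      = (v 1 - single_slot (\<sigma> 1) * v 1) + (v 0 - single_slot (\<sigma> 0) * v 0)"
    by (simp add: vcg_revenue_def agents)
  ultimately show ?thesis
    by (simp add: welfare_single_slot_two_agents)
qed

lemma rank_two_agents_0: "rank 2 b 0 = (if b 0 < b 1 then 2 else 1)"
proof -
  have "{j. j < 2 \<and> (b 0 < b j \<or> b j = b 0 \<and> j < 0)} = (if b 0 < b 1 then {1} else {})"
    by (auto dest: less_two_iff[THEN iffD1])
  then show ?thesis
    by (simp add: rank_def)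
qed

lemma rank_two_agents_1: "rank 2 b 1 = (if b 1 \<le> b 0 then 2 else 1)"
proof -
  have "{j. j < 2 \<and> (b 1 < b j \<or> b j = b 1 \<and> j < 1)} = (if b 1 \<le> b 0 then {0} else {})"
    by (auto dest: less_two_iff[THEN iffD1])
  then show ?thesis
    by (simp add: rank_def)
qed

lemma bid_at_two_agents_second: "bid_at 2 b 2 = min (b 0) (b 1)"
proof -
  have "(THE j. j < 2 \<and> rank 2 b j = 2) = (if b 1 \<le> b 0 then 1 else 0)"
    by (rule the_equality) (auto simp: rank_two_agents_0 rank_two_agents_1 less_two_iff)
  then show ?thesis
    by (simp add: bid_at_def)
qed

definition second_price_payment :: "(nat \<Rightarrow> real) \<Rightarrow> nat \<Rightarrow> real" where
  "second_price_payment b i = (if rank 2 b i = 1 then min (b 0) (b 1) else 0)"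

lemma gsp_payment_single_slot_two_agents:
  "gsp_payment 2 single_slot = second_price_payment"
  by (intro ext)
    (simp add: gsp_payment_def second_price_payment_def single_slot_def bid_at_two_agents_second)

lemma avcg_payment_single_slot_two_agents:
  "avcg_payment 2 1 single_slot = second_price_payment"
proof (intro ext)
  fix b i
  have "1 \<le> rank 2 b i"
    by (simp add: rank_def)
  then show "avcg_payment 2 1 single_slot b i = second_price_payment b i"
    by (cases "rank 2 b i = 1")
      (simp_all add: avcg_payment_def second_price_payment_def single_slot_def
        bid_at_two_agents_second)
qed

lemma revenue_second_price_payment: "revenue 2 second_price_payment b = min (b 0) (b 1)"
proof -
  have "{..<2::nat} = {0, 1}"
    by auto
  then show ?thesis
    by (simp add: revenue_def second_price_payment_def rank_two_agents_0 rank_two_agents_1)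
qed

lemma nash_second_price_payment:
  assumes "types_ok 2 v" and "v 1 \<le> b 0" and "b 1 = 0"
  shows "nash 2 single_slot second_price_payment v b"
  unfolding nash_def
proof (intro conjI allI impI)
  have "0 \<le> v 0" and "0 \<le> v 1"
    using assms(1) unfolding types_ok_def by auto
  with assms(2) have "0 \<le> b 0"
    by linarith
  then show "0 \<le> b i" if "i < 2" for i
    using that assms(3) by (auto dest: less_two_iff[THEN iffD1])
  fix i :: nat and b' :: real
  assume "i < 2" and "0 \<le> b'"
  then consider "i = 0" | "i = 1"
    by (auto dest: less_two_iff[THEN iffD1])
  then show "utility 2 single_slot second_price_payment v (b(i := b')) i
      \<le> utility 2 single_slot second_price_payment v b i"
  proof cases
    case 1
    with \<open>0 \<le> b'\<close> \<open>0 \<le> b 0\<close> \<open>0 \<le> v 0\<close> show ?thesis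
      by (simp add: utility_def second_price_payment_def single_slot_def rank_two_agents_0 assms(3))
  next
    case 2
    with assms(2) \<open>0 \<le> b 0\<close> show ?thesis
      by (simp add: utility_def second_price_payment_def single_slot_def rank_two_agents_1 assms(3))
  qed
qed

theorem theorem1:
  fixes \<epsilon> r :: real
  assumes "\<epsilon> > 0" and "r > 0"
  shows "(\<exists>n k \<alpha> v b. alpha_ok n k \<alpha> \<and> types_ok n v \<and> vcg_revenue n \<alpha> v \<ge> r \<and>
            nash n \<alpha> (avcg_payment n k \<alpha>) v b \<and> revenue n (avcg_payment n k \<alpha>) b \<le> \<epsilon>)
       \<and> (\<exists>n k \<alpha> v b. alpha_ok n k \<alpha> \<and> types_ok n v \<and> vcg_revenue n \<alpha> v \<ge> r \<and>
            nash n \<alpha> (gsp_payment n \<alpha>) v b \<and> revenue n (gsp_payment n \<alpha>) b \<le> \<epsilon>)"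
proof -
  define v :: "nat \<Rightarrow> real" where "v = (\<lambda>_. r)"
  define b :: "nat \<Rightarrow> real" where "b = (\<lambda>_. 0)(0 := r)"
  have types: "types_ok 2 v"
    using assms by (simp add: types_ok_def v_def)
  have alpha: "alpha_ok 2 1 single_slot"
    by (simp add: alpha_ok_single_slot)
  have vcg: "vcg_revenue 2 single_slot v \<ge> r"
    using vcg_revenue_single_slot_two_agents[OF types] by (simp add: v_def)
  have equilibrium: "nash 2 single_slot pay v b \<and> revenue 2 pay b \<le> \<epsilon>"
    if "pay = second_price_payment" for pay
  proof
    show "nash 2 single_slot pay v b"
      unfolding that using types by (rule nash_second_price_payment) (simp_all add: v_def b_def)
    show "revenue 2 pay b \<le> \<epsilon>"
      unfolding that using assms by (simp add: revenue_second_price_payment b_def)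
  qed
  show ?thesis
    using alpha types vcg equilibrium[OF avcg_payment_single_slot_two_agents]
      equilibrium[OF gsp_payment_single_slot_two_agents]
    by blast
qed

end
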